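(* Let $T,\ell$ be positive integers, $\sigma\in(0,1]$, $w\in(0,1]$ and $\delta\in(0,1)$. Let $\mathcal{J}$ be the set of all intervals of width at most $w$ contained in $[0,1]$. For $i\in[T]$, $j\in[\ell]$ let $d_{i,j}$ be drawn from a $T\ell$-step adaptive sequence of $\sigma$-smooth distributions over $[0,1]$. Then with probability at least $1-\delta$, $$\max_{J\in\mathcal{J}}\sum_{i\in[T],\,j\in[\ell]}\mathbb{I}[d_{i,j}\in J]<\frac{T\ell w}{\sigma}\ln\!\left(\frac{2T\ell}{\delta}\right)+10\sqrt{\frac{T\ell w}{\sigma}\ln\!\left(\frac{2T\ell}{\delta}\right)\ln\!\left(\frac1\delta\right)}+10\log\!\left(\frac{10T\ell\log(2T\ell/\delta)}{\sigma\delta}\right).$$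
   Context: A distribution $\mu$ on $[0,1]$ is $\sigma$-smooth if $\mu(A)\le\mathcal{U}(A)/\sigma$ for all measurable $A$, where $\mathcal{U}$ is the uniform distribution on $[0,1]$. A $T\ell$-step adaptive sequence of $\sigma$-smooth distributions generates the $T\ell$ points one at a time, each drawn from a $\sigma$-smooth distribution chosen as a function of the previously realized points. *)

theory Defs
  imports "HOL-Probability.Probability"
begin

abbreviation pts :: "nat \<Rightarrow> (nat \<Rightarrow> real) measure" where
  "pts n \<equiv> PiM {..<n} (\<lambda>_. borel)"

definition unif01 :: "real set \<Rightarrow> real" where
  "unif01 A = measure lborel (A \<inter> {0..1})"

text \<open>A probability distribution mu on the reals is sigma-smooth w.r.t. the uniform
  distribution on [0,1]: mu(A) <= U(A)/sigma for all Borel A (this forces mu([0,1]) = 1).\<close>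
definition smooth :: "real \<Rightarrow> real measure \<Rightarrow> bool" where
  "smooth \<sigma> \<mu> \<longleftrightarrow> prob_space \<mu> \<and> sets \<mu> = sets borel \<and>
     (\<forall>A \<in> sets borel. measure \<mu> A \<le> unif01 A / \<sigma>)"

text \<open>An adaptive kernel: step k chooses, measurably in the previously realised points
  (a function on indices < k), a sigma-smooth distribution.\<close>
definition adaptive_smooth :: "real \<Rightarrow> nat \<Rightarrow> (nat \<Rightarrow> (nat \<Rightarrow> real) \<Rightarrow> real measure) \<Rightarrow> bool" where
  "adaptive_smooth \<sigma> n K \<longleftrightarrow> (\<forall>k<n.
      K k \<in> measurable (pts k) (subprob_algebra borel) \<and>
      (\<forall>f \<in> space (pts k). smooth \<sigma> (K k f)))"

fun adaptive_seq :: "(nat \<Rightarrow> (nat \<Rightarrow> real) \<Rightarrow> real measure) \<Rightarrow> nat \<Rightarrow> (nat \<Rightarrow> real) measure" where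
  "adaptive_seq K 0 = return (pts 0) (\<lambda>_. undefined)"
| "adaptive_seq K (Suc k) =
     bind (adaptive_seq K k) (\<lambda>f. bind (K k f) (\<lambda>x. return (pts (Suc k)) (f(k := x))))"

text \<open>Intervals of width at most w contained in [0,1] (any endpoint type, possibly empty).\<close>
definition intervals_width :: "real \<Rightarrow> real set set" where
  "intervals_width w = {J. is_interval J \<and> J \<subseteq> {0..1} \<and> (\<exists>a. J \<subseteq> {a..a+w})}"

end

theory Submission
  imports Defs
begin

(* Let h = w/16. The windows [k h, k h + w + h], k <= 1/h, are at most 32/w in number, and every
   interval of width w inside [0,1] lies in one of them. Whatever the past, the next point falls into
   a fixed window with probability at most p = 17 w / (16 sigma), so peeling off the last point gives
   E exp(t * hits) <= (1 + (e^t - 1) p)^n <= exp((e^t - 1) p n) for the number of hits of the window.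
   Chernoff's bound and a union bound over the windows bound the failure probability by
   (32/w) exp(-t R + (e^t - 1) * 17 n w / (16 sigma)), which is at most delta for t = 1/4 when
   n w / sigma >= 1 and for t = 1 - ln(n w / sigma) otherwise. *)

section \<open>Adaptive sequences of smooth distributions\<close>

definition adaptive_step ::
    "(nat \<Rightarrow> (nat \<Rightarrow> real) \<Rightarrow> real measure) \<Rightarrow> nat \<Rightarrow> (nat \<Rightarrow> real) \<Rightarrow> (nat \<Rightarrow> real) measure" where
  "adaptive_step K k f = K k f \<bind> (\<lambda>x. return (pts (Suc k)) (f(k := x)))"

lemma adaptive_seq_Suc_step: "adaptive_seq K (Suc k) = adaptive_seq K k \<bind> adaptive_step K k"
  by (simp add: adaptive_step_def[abs_def])

lemma measurable_fun_upd_pts: "(\<lambda>p. (fst p)(k := snd p)) \<in> pts k \<Otimes>\<^sub>M borel \<rightarrow>\<^sub>M pts (Suc k)"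
  by (rule measurable_fun_upd[where J="{..<k}"]) (auto simp: lessThan_Suc)

lemma measurable_fun_upd_pts_point:
  "f \<in> space (pts k) \<Longrightarrow> (\<lambda>x. f(k := x)) \<in> borel \<rightarrow>\<^sub>M pts (Suc k)"
  by (rule measurable_fun_upd[where J="{..<k}"]) (auto simp: lessThan_Suc)

lemma adaptive_step_measurable:
  assumes "adaptive_smooth \<sigma> n K" "k < n"
  shows "adaptive_step K k \<in> pts k \<rightarrow>\<^sub>M prob_algebra (pts (Suc k))"
proof (rule measurable_prob_algebraI)
  have K: "K k \<in> pts k \<rightarrow>\<^sub>M subprob_algebra borel"
    and smooth: "\<And>f. f \<in> space (pts k) \<Longrightarrow> smooth \<sigma> (K k f)"
    using assms unfolding adaptive_smooth_def by auto
  show "adaptive_step K k \<in> pts k \<rightarrow>\<^sub>M subprob_algebra (pts (Suc k))"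
    unfolding adaptive_step_def
    by (rule measurable_bind[OF K measurable_compose[OF measurable_fun_upd_pts return_measurable]])
  fix f assume f: "f \<in> space (pts k)"
  show "prob_space (adaptive_step K k f)"
    unfolding adaptive_step_def
  proof (rule prob_space_bind')
    show "K k f \<in> space (prob_algebra borel)"
      using smooth[OF f] by (simp add: space_prob_algebra smooth_def)
    show "(\<lambda>x. return (pts (Suc k)) (f(k := x))) \<in> borel \<rightarrow>\<^sub>M prob_algebra (pts (Suc k))"
      by (rule measurable_compose[OF measurable_fun_upd_pts_point[OF f] measurable_return_prob_space])
  qed
qed

lemma adaptive_seq_in_prob_algebra:
  assumes "adaptive_smooth \<sigma> n K" "m \<le> n"
  shows "adaptive_seq K m \<in> space (prob_algebra (pts m))"
  using assms(2)
proof (induction m)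
  case 0
  show ?case by (auto simp: space_prob_algebra intro!: prob_space_return)
next
  case (Suc m)
  then have IH: "adaptive_seq K m \<in> space (prob_algebra (pts m))" by simp
  have step: "adaptive_step K m \<in> pts m \<rightarrow>\<^sub>M prob_algebra (pts (Suc m))"
    using adaptive_step_measurable[OF assms(1)] Suc.prems by simp
  show ?case
    unfolding adaptive_seq_Suc_step space_prob_algebra
    using prob_space_bind'[OF IH step] sets_bind'[OF IH step] by simp
qed

lemma
  assumes "adaptive_smooth \<sigma> n K" "m \<le> n"
  shows prob_space_adaptive_seq: "prob_space (adaptive_seq K m)"
    and sets_adaptive_seq: "sets (adaptive_seq K m) = sets (pts m)"
  using adaptive_seq_in_prob_algebra[OF assms] by (simp_all add: space_prob_algebra)

definition hits :: "real set \<Rightarrow> nat \<Rightarrow> (nat \<Rightarrow> real) \<Rightarrow> real" where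
  "hits W m d = (\<Sum>i<m. indicator W (d i))"

lemma borel_measurable_hits: "W \<in> sets borel \<Longrightarrow> m \<le> k \<Longrightarrow> hits W m \<in> borel_measurable (pts k)"
  unfolding hits_def by measurable auto

lemma hits_fun_upd: "hits W (Suc m) (f(m := x)) = hits W m f + indicator W x"
  unfolding hits_def by (simp add: sum.lessThan_Suc)

lemma hits_mono: "J \<subseteq> J' \<Longrightarrow> hits J m d \<le> hits J' m d"
  unfolding hits_def by (intro sum_mono) (auto split: split_indicator)

lemma hits_le: "hits J m d \<le> real m"
proof -
  have "hits J m d \<le> (\<Sum>i<m. 1)"
    unfolding hits_def by (intro sum_mono) (auto split: split_indicator)
  then show ?thesis by simp
qed

lemma of_nat_interval_counts_eq_hits:
  "real (\<Sum>i<T. \<Sum>j<L. (if d (i * L + j) \<in> J then 1 else 0 :: nat)) = hits J (T * L) d"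
proof -
  let ?c = "\<lambda>p. if d p \<in> J then 1 else 0 :: nat"
  have "(\<Sum>j<L. ?c (i * L + j)) = sum ?c {i * L..<i * L + L}" for i
    using sum.shift_bounds_nat_ivl[of ?c 0 "i * L" L] by (simp add: atLeast0LessThan add.commute)
  then have regroup: "(\<Sum>i<T. \<Sum>j<L. ?c (i * L + j)) = (\<Sum>p<T * L. ?c p)"
    using sum.nat_group[of ?c L T] by simp
  show ?thesis
    unfolding regroup hits_def of_nat_sum by (intro sum.cong) (auto simp: indicator_def)
qed

section \<open>Exponential moments of window counts\<close>

lemma nn_integral_exp_indicator_le:
  assumes "prob_space M" "W \<in> sets M" "measure M W \<le> p" "0 \<le> t"
  shows "(\<integral>\<^sup>+x. exp (t * indicator W x) \<partial>M) \<le> ennreal (1 + (exp t - 1) * p)"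
proof -
  interpret prob_space M by fact
  have c: "0 \<le> exp t - 1" using assms(4) by simp
  have "(\<integral>\<^sup>+x. exp (t * indicator W x) \<partial>M) = (\<integral>\<^sup>+x. ennreal (1 + (exp t - 1) * indicator W x) \<partial>M)"
    by (intro nn_integral_cong) (simp split: split_indicator)
  also have "\<dots> = (\<integral>\<^sup>+x. 1 + ennreal (exp t - 1) * indicator W x \<partial>M)"
    using c by (intro nn_integral_cong) (auto split: split_indicator simp: ennreal_plus)
  also have "\<dots> = 1 + ennreal (exp t - 1) * measure M W"
    using assms(2) by (simp add: nn_integral_add nn_integral_cmult_indicator emeasure_eq_measure prob_space)
  also have "\<dots> = ennreal (1 + (exp t - 1) * measure M W)"
    using c by (simp add: ennreal_plus ennreal_mult)
  also have "\<dots> \<le> ennreal (1 + (exp t - 1) * p)"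
    using assms(3) c by (intro ennreal_leI) (simp add: mult_left_mono)
  finally show ?thesis .
qed

lemma nn_integral_exp_hits_adaptive_step_le:
  assumes "adaptive_smooth \<sigma> n K" "m < n" and f: "f \<in> space (pts m)"
    and W: "W \<in> sets borel" and "0 \<le> t" "measure (K m f) W \<le> p"
  shows "(\<integral>\<^sup>+d. exp (t * hits W (Suc m) d) \<partial>adaptive_step K m f)
    \<le> ennreal (exp (t * hits W m f)) * ennreal (1 + (exp t - 1) * p)"
proof -
  have "smooth \<sigma> (K m f)" using assms(1,2) f unfolding adaptive_smooth_def by auto
  then have prob: "prob_space (K m f)" and sets: "sets (K m f) = sets borel"
    unfolding smooth_def by auto
  have upd: "(\<lambda>x. f(m := x)) \<in> K m f \<rightarrow>\<^sub>M pts (Suc m)"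
    using measurable_fun_upd_pts_point[OF f] by (simp add: measurable_cong_sets[OF sets refl])
  have "adaptive_step K m f = distr (K m f) (pts (Suc m)) (\<lambda>x. f(m := x))"
    unfolding adaptive_step_def using prob_space.not_empty[OF prob] upd by (rule bind_return_distr')
  then have "(\<integral>\<^sup>+d. exp (t * hits W (Suc m) d) \<partial>adaptive_step K m f)
      = (\<integral>\<^sup>+x. exp (t * hits W (Suc m) (f(m := x))) \<partial>K m f)"
    using borel_measurable_hits[OF W] by (simp add: nn_integral_distr[OF upd])
  also have "\<dots> = (\<integral>\<^sup>+x. ennreal (exp (t * hits W m f)) * exp (t * indicator W x) \<partial>K m f)"
    by (simp add: hits_fun_upd distrib_left exp_add ennreal_mult)
  also have "\<dots> = ennreal (exp (t * hits W m f)) * (\<integral>\<^sup>+x. exp (t * indicator W x) \<partial>K m f)"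
    using W sets by (intro nn_integral_cmult) (simp add: measurable_cong_sets[OF sets refl])
  also have "\<dots> \<le> ennreal (exp (t * hits W m f)) * ennreal (1 + (exp t - 1) * p)"
    using W sets assms(5,6) by (intro mult_left_mono nn_integral_exp_indicator_le[OF prob]) auto
  finally show ?thesis .
qed

lemma nn_integral_exp_hits_adaptive_seq_le:
  assumes ad: "adaptive_smooth \<sigma> n K" and "m \<le> n" and W: "W \<in> sets borel" and "0 \<le> t" "0 \<le> p"
    and Kp: "\<And>k f. k < n \<Longrightarrow> f \<in> space (pts k) \<Longrightarrow> measure (K k f) W \<le> p"
  shows "(\<integral>\<^sup>+d. exp (t * hits W m d) \<partial>adaptive_seq K m) \<le> ennreal ((1 + (exp t - 1) * p) ^ m)"
  using \<open>m \<le> n\<close>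
proof (induction m)
  case 0
  show ?case by (simp add: nn_integral_return hits_def)
next
  case (Suc m)
  let ?q = "1 + (exp t - 1) * p"
  have [measurable]: "hits W k \<in> borel_measurable (pts k)" for k
    using borel_measurable_hits[OF W] by simp
  have sets: "sets (adaptive_seq K m) = sets (pts m)"
    using sets_adaptive_seq[OF ad] Suc.prems by simp
  have step: "adaptive_step K m \<in> adaptive_seq K m \<rightarrow>\<^sub>M subprob_algebra (pts (Suc m))"
    using adaptive_step_measurable[OF ad] Suc.prems
    by (auto simp: measurable_cong_sets[OF sets refl] intro: measurable_prob_algebraD)
  have "(\<integral>\<^sup>+d. exp (t * hits W (Suc m) d) \<partial>adaptive_seq K (Suc m))
      = (\<integral>\<^sup>+f. \<integral>\<^sup>+d. exp (t * hits W (Suc m) d) \<partial>adaptive_step K m f \<partial>adaptive_seq K m)"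
    unfolding adaptive_seq_Suc_step by (intro nn_integral_bind[OF _ step]) measurable
  also have "\<dots> \<le> (\<integral>\<^sup>+f. ennreal (exp (t * hits W m f)) * ennreal ?q \<partial>adaptive_seq K m)"
    using Suc.prems Kp sets_eq_imp_space_eq[OF sets] \<open>0 \<le> t\<close>
    by (intro nn_integral_mono nn_integral_exp_hits_adaptive_step_le[OF ad _ _ W]) auto
  also have "\<dots> = (\<integral>\<^sup>+f. exp (t * hits W m f) \<partial>adaptive_seq K m) * ennreal ?q"
    by (intro nn_integral_multc) (simp add: measurable_cong_sets[OF sets refl])
  also have "\<dots> \<le> ennreal (?q ^ m) * ennreal ?q"
    using Suc by (intro mult_right_mono) auto
  also have "\<dots> = ennreal (?q ^ Suc m)"
    using \<open>0 \<le> t\<close> \<open>0 \<le> p\<close> by (subst ennreal_mult[symmetric]) (auto simp: mult.commute)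
  finally show ?case .
qed

lemma prob_hits_ge_le:
  assumes ad: "adaptive_smooth \<sigma> n K" and W: "W \<in> sets borel" and "0 < t" "0 \<le> p"
    and Kp: "\<And>k f. k < n \<Longrightarrow> f \<in> space (pts k) \<Longrightarrow> measure (K k f) W \<le> p"
  shows "measure (adaptive_seq K n) {d \<in> space (pts n). R \<le> hits W n d}
    \<le> exp (- t * R + (exp t - 1) * p * n)"
proof -
  let ?M = "adaptive_seq K n"
  interpret prob_space ?M using prob_space_adaptive_seq[OF ad] by simp
  have sets: "sets ?M = sets (pts n)" using sets_adaptive_seq[OF ad] by simp
  note space = sets_eq_imp_space_eq[OF sets]
  have [measurable]: "hits W n \<in> borel_measurable ?M"
    using borel_measurable_hits[OF W] by (simp add: measurable_cong_sets[OF sets refl])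
  have q: "0 \<le> (exp t - 1) * p" using \<open>0 < t\<close> \<open>0 \<le> p\<close> by simp
  have mgf: "(\<integral>\<^sup>+d. ennreal (exp (t * hits W n d)) * indicator (space ?M) d \<partial>?M)
      \<le> ennreal (exp ((exp t - 1) * p * n))"
  proof -
    have "(\<integral>\<^sup>+d. ennreal (exp (t * hits W n d)) * indicator (space ?M) d \<partial>?M)
        = (\<integral>\<^sup>+d. exp (t * hits W n d) \<partial>?M)"
      by (intro nn_integral_cong) simp
    also have "\<dots> \<le> ennreal ((1 + (exp t - 1) * p) ^ n)"
      using assms by (intro nn_integral_exp_hits_adaptive_seq_le[OF ad]) auto
    also have "\<dots> \<le> ennreal (exp ((exp t - 1) * p * n))"
      using q by (intro ennreal_leI order.trans[OF power_mono[OF exp_ge_add_one_self]])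
        (auto simp: exp_of_nat_mult[symmetric] mult.commute)
    finally show ?thesis .
  qed
  have "emeasure ?M {d \<in> space ?M. R \<le> hits W n d}
      \<le> ennreal (exp (- t * R)) * (\<integral>\<^sup>+d. ennreal (exp (t * hits W n d)) * indicator (space ?M) d \<partial>?M)"
    using \<open>0 < t\<close> by (intro Chernoff_ineq_nn_integral_ge) auto
  also have "\<dots> \<le> ennreal (exp (- t * R)) * ennreal (exp ((exp t - 1) * p * n))"
    using mgf by (rule mult_left_mono) simp
  finally show ?thesis
    using space unfolding exp_add by (simp add: emeasure_eq_measure ennreal_mult[symmetric])
qed

section \<open>Covering intervals by grid windows\<close>

lemma smooth_measure_interval_le:
  assumes "smooth \<sigma> \<mu>" "0 < \<sigma>" "0 \<le> l"
  shows "measure \<mu> {a..a + l} \<le> l / \<sigma>"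
proof -
  have "unif01 {a..a + l} = measure lborel {max a 0..min (a + l) 1}"
    unfolding unif01_def by (simp add: Int_atLeastAtMost)
  also have "\<dots> \<le> l" using assms(3) by (auto simp: min_def max_def)
  finally have "unif01 {a..a + l} / \<sigma> \<le> l / \<sigma>"
    using assms(2) by (simp add: divide_right_mono)
  moreover have "measure \<mu> {a..a + l} \<le> unif01 {a..a + l} / \<sigma>"
    using assms(1) unfolding smooth_def by auto
  ultimately show ?thesis by linarith
qed

lemma interval_subset_grid_window:
  assumes "J \<in> intervals_width w" "0 < h"
  obtains k where "k \<le> nat \<lfloor>1 / h\<rfloor>" "J \<subseteq> {real k * h .. real k * h + (w + h)}"
proof (cases "J = {}")
  case True
  then show ?thesis using that[of 0] by simp
next
  case False
  then obtain x where x: "x \<in> J" by auto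
  obtain c where c: "J \<subseteq> {c..c + w}" and J01: "J \<subseteq> {0..1}"
    using assms(1) unfolding intervals_width_def by auto
  define a where "a = max c 0"
  have a: "0 \<le> a" "a \<le> 1" using x c J01 unfolding a_def by force+
  define k where "k = nat \<lfloor>a / h\<rfloor>"
  have k: "real k = of_int \<lfloor>a / h\<rfloor>" unfolding k_def using a assms(2) by simp
  have "real k * h \<le> a"
    using of_int_floor_le[of "a / h"] assms(2) by (simp add: k le_divide_eq)
  moreover have "a < real k * h + h"
    using real_of_int_floor_add_one_gt[of "a / h"] assms(2) by (simp add: k divide_less_eq algebra_simps)
  moreover have "J \<subseteq> {a..a + w}"
  proof
    fix y assume "y \<in> J"
    then have "c \<le> y" "y \<le> c + w" "0 \<le> y" using c J01 by auto
    then show "y \<in> {a..a + w}" unfolding a_def by auto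
  qed
  ultimately have "J \<subseteq> {real k * h .. real k * h + (w + h)}" by auto
  moreover have "k \<le> nat \<lfloor>1 / h\<rfloor>"
    unfolding k_def using a assms(2) by (intro nat_mono floor_mono divide_right_mono) auto
  ultimately show ?thesis using that by blast
qed

(* Replaces the uncountable family of intervals by finitely many intervals anchored at data points;
   this is what makes the good event measurable. *)
lemma all_interval_hits_less_iff_anchored:
  assumes "0 < R"
  shows "(\<forall>J\<in>intervals_width w. hits J n d < R) \<longleftrightarrow>
         (\<forall>a<n. d a \<in> {0..1} \<longrightarrow> hits {d a..min 1 (d a + w)} n d < R)"
proof
  assume "\<forall>J\<in>intervals_width w. hits J n d < R"
  moreover have "{d a..min 1 (d a + w)} \<in> intervals_width w" if "d a \<in> {0..1}" for a
    using that unfolding intervals_width_def by (auto intro!: exI[of _ "d a"])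
  ultimately show "\<forall>a<n. d a \<in> {0..1} \<longrightarrow> hits {d a..min 1 (d a + w)} n d < R"
    by blast
next
  assume anchored: "\<forall>a<n. d a \<in> {0..1} \<longrightarrow> hits {d a..min 1 (d a + w)} n d < R"
  show "\<forall>J\<in>intervals_width w. hits J n d < R"
  proof
    fix J assume "J \<in> intervals_width w"
    then obtain c where c: "J \<subseteq> {c..c + w}" and J01: "J \<subseteq> {0..1}"
      unfolding intervals_width_def by auto
    show "hits J n d < R"
    proof (cases "\<exists>p<n. d p \<in> J")
      case False
      then have "hits J n d = 0" unfolding hits_def by (intro sum.neutral) auto
      with assms show ?thesis by simp
    next
      case True
      \<comment> \<open>anchor at the leftmost data point in \<open>J\<close>\<close>
      define D where "D = d ` {p. p < n \<and> d p \<in> J}"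
      have D: "finite D" "D \<noteq> {}" unfolding D_def using True by auto
      obtain a where a: "a < n" "d a \<in> J" "d a = Min D"
        using Min_in[OF D] unfolding D_def by auto
      have "d a \<le> d p \<and> d p \<le> min 1 (d a + w)" if "p < n" "d p \<in> J" for p
      proof -
        have "d a \<le> d p" using that Min_le[OF D(1)] unfolding a(3) D_def by auto
        moreover have "d p \<le> c + w" "c \<le> d a" "d p \<le> 1" using that a(2) c J01 by auto
        ultimately show ?thesis by linarith
      qed
      then have "hits J n d \<le> hits {d a..min 1 (d a + w)} n d"
        unfolding hits_def by (intro sum_mono) (auto split: split_indicator)
      also have "\<dots> < R" using anchored a(1,2) J01 by blast
      finally show ?thesis .
    qed
  qed
qed

lemma sets_all_interval_hits_less:
  assumes "0 < R"
  shows "{d \<in> space (pts n). \<forall>J\<in>intervals_width w. hits J n d < R} \<in> sets (pts n)"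
proof -
  have comp: "(\<lambda>d. d i) \<in> borel_measurable (pts n)" if "i \<in> {..<n}" for i
    using that by (intro measurable_component_singleton) auto
  have le: "Measurable.pred (pts n) (\<lambda>d. f d \<le> g d)"
    if "f \<in> borel_measurable (pts n)" "g \<in> borel_measurable (pts n)" for f g :: "_ \<Rightarrow> real"
    using borel_measurable_le[OF that] unfolding pred_def .
  have "Measurable.pred (pts n) (\<lambda>d. \<forall>a\<in>{..<n}. d a \<in> {0..1} \<longrightarrow>
      (\<Sum>p<n. if d a \<le> d p \<and> d p \<le> min 1 (d a + w) then 1 else 0 :: real) < R)"
  proof (intro pred_intros_finite(3) pred_intros_logic(4))
    fix a assume a: "a \<in> {..<n}"
    show "Measurable.pred (pts n) (\<lambda>d. d a \<in> {0..1})"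
      using measurable_sets[OF comp[OF a], of "{0..1}"] unfolding pred_def
      by (simp add: vimage_def Int_def conj_commute)
    have "Measurable.pred (pts n) (\<lambda>d. d a \<le> d p \<and> d p \<le> min 1 (d a + w))" if "p \<in> {..<n}" for p
      by (intro pred_intros_logic(3) le borel_measurable_min borel_measurable_add comp a that
          measurable_const) auto
    then have "(\<lambda>d. \<Sum>p<n. if d a \<le> d p \<and> d p \<le> min 1 (d a + w) then 1 else 0 :: real)
        \<in> borel_measurable (pts n)"
      unfolding pred_def by (intro borel_measurable_sum measurable_If) auto
    from borel_measurable_less[OF this measurable_const]
    show "Measurable.pred (pts n) (\<lambda>d. (\<Sum>p<n. if d a \<le> d p \<and> d p \<le> min 1 (d a + w) then 1 else 0 :: real) < R)"
      unfolding pred_def by simp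
  qed auto
  then show ?thesis
    unfolding all_interval_hits_less_iff_anchored[OF assms]
    unfolding hits_def indicator_def of_bool_def pred_def atLeastAtMost_iff Ball_def lessThan_iff .
qed

lemma prob_exists_interval_hits_ge_le:
  assumes ad: "adaptive_smooth \<sigma> n K" and "0 < \<sigma>" "0 < w" "w \<le> 1" "0 < t"
  shows "measure (adaptive_seq K n) {d \<in> space (pts n). \<exists>J\<in>intervals_width w. R \<le> hits J n d}
    \<le> 32 / w * exp (- t * R + (exp t - 1) * (17 / 16) * (n * w / \<sigma>))"
proof -
  let ?M = "adaptive_seq K n"
  interpret prob_space ?M using prob_space_adaptive_seq[OF ad] by simp
  have sets: "sets ?M = sets (pts n)" using sets_adaptive_seq[OF ad] by simp
  \<comment> \<open>the slack \<open>h\<close> of the windows is where the factor \<open>17 / 16\<close> comes from\<close>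
  define h where "h = w / 16"
  define N where "N = Suc (nat \<lfloor>1 / h\<rfloor>)"
  define window where "window k = {real k * h .. real k * h + (w + h)}" for k :: nat
  define S where "S k = {d \<in> space (pts n). R \<le> hits (window k) n d}" for k
  define B where "B = exp (- t * R + (exp t - 1) * ((w + h) / \<sigma>) * n)"
  have h: "0 < h" using \<open>0 < w\<close> by (simp add: h_def)
  have window_borel: "window k \<in> sets borel" for k unfolding window_def by simp
  have S_sets: "S k \<in> sets ?M" for k
    using borel_measurable_le[OF measurable_const borel_measurable_hits[OF window_borel order.refl]]
    unfolding S_def sets by simp
  have S_bound: "measure ?M (S k) \<le> B" for k
    unfolding S_def B_def
  proof (rule prob_hits_ge_le[OF ad window_borel \<open>0 < t\<close>])
    show "0 \<le> (w + h) / \<sigma>" using h assms by simp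
    fix i f assume "i < n" "f \<in> space (pts i)"
    then have "smooth \<sigma> (K i f)" using ad unfolding adaptive_smooth_def by auto
    then show "measure (K i f) (window k) \<le> (w + h) / \<sigma>"
      unfolding window_def using assms h by (intro smooth_measure_interval_le) auto
  qed
  have cover: "{d \<in> space (pts n). \<exists>J\<in>intervals_width w. R \<le> hits J n d} \<subseteq> (\<Union>k<N. S k)"
  proof safe
    fix d J assume d: "d \<in> space (pts n)" and J: "J \<in> intervals_width w" "R \<le> hits J n d"
    obtain k where "k \<le> nat \<lfloor>1 / h\<rfloor>" "J \<subseteq> window k"
      using interval_subset_grid_window[OF J(1) h] unfolding window_def by blast
    moreover have "R \<le> hits (window k) n d"
      using J(2) hits_mono[OF \<open>J \<subseteq> window k\<close>] by (rule order.trans)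
    ultimately show "d \<in> (\<Union>k<N. S k)"
      using d unfolding S_def N_def by (auto simp: less_Suc_eq_le)
  qed
  have "measure ?M {d \<in> space (pts n). \<exists>J\<in>intervals_width w. R \<le> hits J n d}
      \<le> measure ?M (\<Union>k<N. S k)"
    using S_sets by (intro finite_measure_mono[OF cover]) auto
  also have "\<dots> \<le> (\<Sum>k<N. measure ?M (S k))"
    using S_sets by (intro measure_UNION_le) auto
  also have "\<dots> \<le> N * B"
    using sum_mono[of "{..<N}", OF S_bound] by simp
  also have "\<dots> \<le> 32 / w * B"
  proof (rule mult_right_mono)
    have "real N \<le> 1 / h + 1" unfolding N_def using h by simp
    then show "real N \<le> 32 / w" using assms unfolding h_def by (simp add: field_simps)
  qed (simp add: B_def)
  also have "B = exp (- t * R + (exp t - 1) * (17 / 16) * (n * w / \<sigma>))"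
    unfolding B_def h_def by (simp add: field_simps)
  finally show ?thesis .
qed

section \<open>Choice of the Chernoff exponent\<close>

(* In the application mu = n w / sigma, rho = n / sigma and L0 = ln (2 n / delta). *)

lemma three_ln_two_le_ln_ten: "3 * ln 2 \<le> ln (10::real)"
proof -
  have "ln (8::real) \<le> ln 10" by simp
  moreover have "ln (8::real) = 3 * ln 2" using ln_realpow[of 2 3] by simp
  ultimately show ?thesis by simp
qed

lemma chernoff_exponent_quarter:
  fixes \<mu> \<rho> w \<delta> L0 R :: real
  assumes "0 < w" "w \<le> 1" "0 < \<delta>" "\<delta> < 1" "1 \<le> \<rho>" "\<mu> = \<rho> * w" "4 / 3 \<le> L0" "1 \<le> \<mu>"
    and R: "\<mu> * L0 + 10 * ln (10 * \<rho> / \<delta>) \<le> R"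
  shows "ln (32 / w) + (- (1 / 4) * R + (exp (1 / 4) - 1) * (17 / 16) * \<mu>) \<le> ln \<delta>"
proof -
  have "exp (1 / 4 :: real) \<le> 21 / 16" using exp_bound[of "1 / 4 :: real"] by (simp add: power2_eq_square)
  then have "(exp (1 / 4) - 1) * (17 / 16) * \<mu> \<le> 85 / 256 * \<mu>"
    using assms(8) by (intro mult_right_mono) auto
  also have "\<dots> \<le> 1 / 4 * \<mu> * L0" using assms(7,8) by simp
  finally have mean: "(exp (1 / 4) - 1) * (17 / 16) * \<mu> \<le> 1 / 4 * \<mu> * L0" .
  have "ln (10 * \<rho> / \<delta>) = ln 10 + ln \<mu> - ln w - ln \<delta>"
    using assms(1,3,5,6) by (simp add: ln_mult ln_div)
  moreover have "ln (32::real) = 5 * ln 2" using ln_realpow[of 2 5] by simp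
  moreover have "ln (32 / w) = ln 32 - ln w" using assms(1) by (simp add: ln_div)
  moreover have "0 \<le> ln \<mu>" "ln w \<le> 0" "ln \<delta> \<le> 0" using assms by simp_all
  ultimately show ?thesis using mean R three_ln_two_le_ln_ten ln2_ge_two_thirds by argo
qed

lemma chernoff_exponent_log:
  fixes \<mu> \<rho> w \<delta> L0 R :: real
  assumes "0 < w" "0 < \<delta>" "\<delta> < 1" "1 \<le> \<rho>" "\<mu> = \<rho> * w" "0 \<le> L0" "\<mu> < 1"
    and R: "\<mu> * L0 + 10 * ln (10 * \<rho> / \<delta>) \<le> R"
  shows "ln (32 / w) + (- (1 - ln \<mu>) * R + (exp (1 - ln \<mu>) - 1) * (17 / 16) * \<mu>) \<le> ln \<delta>"
proof -
  have \<mu>: "0 < \<mu>" using assms(1,4,5) by simp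
  have "exp (1 - ln \<mu>) = exp 1 / \<mu>" using \<mu> by (simp add: exp_diff)
  then have "(exp (1 - ln \<mu>) - 1) * (17 / 16) * \<mu> \<le> exp 1 * (17 / 16)"
    using \<mu> by (simp add: field_simps)
  also have "\<dots> \<le> 4" using exp_bound[of "1::real"] by simp
  finally have mean: "(exp (1 - ln \<mu>) - 1) * (17 / 16) * \<mu> \<le> 4" .
  have log_split: "ln (10 * \<rho> / \<delta>) = ln 10 + ln \<rho> - ln \<delta>"
    using assms(2,4) by (simp add: ln_mult ln_div)
  have "0 \<le> ln \<rho>" "ln \<delta> \<le> 0" "ln \<mu> < 0" using assms \<mu> by simp_all
  have "0 \<le> \<mu> * L0" using \<mu> assms(6) by simp
  then have R1: "1 \<le> R"
    using R log_split \<open>0 \<le> ln \<rho>\<close> \<open>ln \<delta> \<le> 0\<close> three_ln_two_le_ln_ten ln2_ge_two_thirds by linarith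
  have "R - ln \<mu> \<le> (1 - ln \<mu>) * R"
    using mult_left_mono[OF R1, of "- ln \<mu>"] \<open>ln \<mu> < 0\<close> by (simp add: algebra_simps)
  moreover have "ln \<mu> = ln \<rho> + ln w" using assms(1,4,5) by (simp add: ln_mult)
  moreover have "ln (32 / w) = 5 * ln 2 - ln w"
    using assms(1) ln_realpow[of 2 5] by (simp add: ln_div)
  ultimately show ?thesis
    using mean R log_split \<open>0 \<le> \<mu> * L0\<close> \<open>0 \<le> ln \<rho>\<close> \<open>ln \<delta> \<le> 0\<close> three_ln_two_le_ln_ten ln2_ge_two_thirds
    by linarith
qed

lemma chernoff_exponent_exists:
  fixes \<mu> \<rho> w \<delta> L0 R :: real
  assumes "0 < w" "w \<le> 1" "0 < \<delta>" "\<delta> < 1" "1 \<le> \<rho>" "\<mu> = \<rho> * w" "4 / 3 \<le> L0"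
    and "\<mu> * L0 + 10 * ln (10 * \<rho> / \<delta>) \<le> R"
  obtains t where "0 < t" "32 / w * exp (- t * R + (exp t - 1) * (17 / 16) * \<mu>) \<le> \<delta>"
proof -
  have "\<exists>t>0. ln (32 / w) + (- t * R + (exp t - 1) * (17 / 16) * \<mu>) \<le> ln \<delta>"
  proof (cases "1 \<le> \<mu>")
    case True
    have "(0::real) < 1 / 4" by simp
    with chernoff_exponent_quarter[OF assms(1-7) True assms(8)] show ?thesis by blast
  next
    case False
    then have "\<mu> < 1" by simp
    moreover have "0 < \<mu>" using assms(1,5,6) by simp
    ultimately have "ln \<mu> < 0" by simp
    then have "0 < 1 - ln \<mu>" by simp
    moreover have "0 \<le> L0" using assms(7) by simp
    ultimately show ?thesis
      using chernoff_exponent_log[OF assms(1) assms(3-6) _ \<open>\<mu> < 1\<close> assms(8)] by blast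
  qed
  then obtain t where "0 < t" and "ln (32 / w) + (- t * R + (exp t - 1) * (17 / 16) * \<mu>) \<le> ln \<delta>"
    by blast
  then have "exp (ln (32 / w)) * exp (- t * R + (exp t - 1) * (17 / 16) * \<mu>) \<le> \<delta>"
    using assms(3) by (metis exp_add exp_le_cancel_iff exp_ln)
  then show ?thesis
    using that[OF \<open>0 < t\<close>] assms(1) by simp
qed

lemma threshold_lower_bound:
  fixes n \<sigma> w \<delta> :: real
  assumes "2 \<le> n" "0 < \<sigma>" "0 < w" "0 < \<delta>" "\<delta> < 1"
  shows "4 / 3 \<le> ln (2 * n / \<delta>)"
    and "n * w / \<sigma> * ln (2 * n / \<delta>) + 10 * ln (10 * (n / \<sigma>) / \<delta>)
      \<le> n * w / \<sigma> * ln (2 * n / \<delta>) + 10 * sqrt (n * w / \<sigma> * ln (2 * n / \<delta>) * ln (1 / \<delta>))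
        + 10 * ln (10 * n * ln (2 * n / \<delta>) / (\<sigma> * \<delta>))"
proof -
  have "ln 4 \<le> ln (2 * n / \<delta>)"
    using assms by (subst ln_le_cancel_iff) (auto simp: field_simps)
  moreover have "ln (4::real) = 2 * ln 2" using ln_realpow[of 2 2] by simp
  ultimately show L0: "4 / 3 \<le> ln (2 * n / \<delta>)" using ln2_ge_two_thirds by linarith
  have "10 * (n / \<sigma>) / \<delta> \<le> 10 * n * ln (2 * n / \<delta>) / (\<sigma> * \<delta>)"
    using assms L0 by (simp add: field_simps)
  then have "ln (10 * (n / \<sigma>) / \<delta>) \<le> ln (10 * n * ln (2 * n / \<delta>) / (\<sigma> * \<delta>))"
    using assms by (subst ln_le_cancel_iff) auto
  moreover have "0 \<le> sqrt (n * w / \<sigma> * ln (2 * n / \<delta>) * ln (1 / \<delta>))"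
    using assms L0 by simp
  ultimately show "n * w / \<sigma> * ln (2 * n / \<delta>) + 10 * ln (10 * (n / \<sigma>) / \<delta>)
      \<le> n * w / \<sigma> * ln (2 * n / \<delta>) + 10 * sqrt (n * w / \<sigma> * ln (2 * n / \<delta>) * ln (1 / \<delta>))
        + 10 * ln (10 * n * ln (2 * n / \<delta>) / (\<sigma> * \<delta>))"
    by linarith
qed

lemma threshold_gt_one:
  fixes n \<sigma> w \<delta> :: real
  assumes "1 \<le> n" "0 < \<sigma>" "\<sigma> \<le> 1" "0 < w" "0 < \<delta>" "\<delta> < 1"
  shows "1 < n * w / \<sigma> * ln (2 * n / \<delta>) + 10 * sqrt (n * w / \<sigma> * ln (2 * n / \<delta>) * ln (1 / \<delta>))
    + 10 * ln (10 * n * ln (2 * n / \<delta>) / (\<sigma> * \<delta>))"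
proof -
  have "ln 2 \<le> ln (2 * n / \<delta>)"
    using assms by (subst ln_le_cancel_iff) (auto simp: field_simps)
  then have L0: "2 / 3 \<le> ln (2 * n / \<delta>)" using ln2_ge_two_thirds by linarith
  have "2 / 3 \<le> n * ln (2 * n / \<delta>)" using mult_mono[OF assms(1) L0] assms(1) by simp
  then have "2 \<le> 10 * n * ln (2 * n / \<delta>)" by linarith
  also have "\<dots> \<le> 10 * n * ln (2 * n / \<delta>) / (\<sigma> * \<delta>)"
    using assms L0 by (simp add: le_divide_eq mult_le_one)
  finally have "ln 2 \<le> ln (10 * n * ln (2 * n / \<delta>) / (\<sigma> * \<delta>))" by simp
  moreover have "0 \<le> n * w / \<sigma> * ln (2 * n / \<delta>)"
    "0 \<le> sqrt (n * w / \<sigma> * ln (2 * n / \<delta>) * ln (1 / \<delta>))"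
    using assms L0 by simp_all
  ultimately show ?thesis using ln2_ge_two_thirds by linarith
qed

lemma prob_all_interval_hits_less_ge:
  fixes n :: nat and \<sigma> w \<delta> :: real
  assumes ad: "adaptive_smooth \<sigma> n K" and "1 \<le> n"
    and \<sigma>: "0 < \<sigma>" "\<sigma> \<le> 1" and w: "0 < w" "w \<le> 1" and \<delta>: "0 < \<delta>" "\<delta> < 1"
  defines "R \<equiv> n * w / \<sigma> * ln (2 * n / \<delta>) + 10 * sqrt (n * w / \<sigma> * ln (2 * n / \<delta>) * ln (1 / \<delta>))
    + 10 * ln (10 * n * ln (2 * n / \<delta>) / (\<sigma> * \<delta>))"
  shows "1 - \<delta> \<le> measure (adaptive_seq K n) {d \<in> space (pts n). \<forall>J\<in>intervals_width w. hits J n d < R}"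
    (is "_ \<le> measure ?M ?G")
proof -
  interpret prob_space ?M using prob_space_adaptive_seq[OF ad] by simp
  have sets: "sets ?M = sets (pts n)" using sets_adaptive_seq[OF ad] by simp
  have R: "1 < R" unfolding R_def using threshold_gt_one assms by simp
  have "measure ?M (space (pts n) - ?G) \<le> \<delta>"
  proof (cases "n = 1")
    case True
    have "hits J n d < R" for J d using hits_le[of J n d] R True by simp
    then have "space (pts n) - ?G = {}" by auto
    then show ?thesis using \<delta> by (simp only: measure_empty)
  next
    case False
    then have n: "2 \<le> real n" using \<open>1 \<le> n\<close> by simp
    obtain t where "0 < t" and t: "32 / w * exp (- t * R + (exp t - 1) * (17 / 16) * (n * w / \<sigma>)) \<le> \<delta>"
      using chernoff_exponent_exists[of w \<delta> "n / \<sigma>" "n * w / \<sigma>" "ln (2 * n / \<delta>)" R]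
        threshold_lower_bound[OF n \<sigma>(1) w(1) \<delta>] n \<sigma> w \<delta> unfolding R_def by auto
    have "space (pts n) - ?G = {d \<in> space (pts n). \<exists>J\<in>intervals_width w. R \<le> hits J n d}"
      by (auto simp: not_less)
    then show ?thesis
      using prob_exists_interval_hits_ge_le[OF ad \<sigma>(1) w \<open>0 < t\<close>, of R] t by simp
  qed
  moreover have "?G \<in> sets ?M" using sets_all_interval_hits_less R sets by simp
  ultimately show ?thesis
    using prob_compl[of ?G] sets_eq_imp_space_eq[OF sets] by simp
qed

lemma Max_interval_counts_less_iff:
  "real (Max ((\<lambda>J. \<Sum>i<T. \<Sum>j<L. (if d (i * L + j) \<in> J then 1 else 0 :: nat)) ` intervals_width w)) < R
    \<longleftrightarrow> (\<forall>J\<in>intervals_width w. hits J (T * L) d < R)"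
proof -
  let ?A = "(\<lambda>J. \<Sum>i<T. \<Sum>j<L. (if d (i * L + j) \<in> J then 1 else 0 :: nat)) ` intervals_width w"
  have "?A \<subseteq> {..T * L}"
  proof (rule image_subsetI)
    fix J
    have "real (\<Sum>i<T. \<Sum>j<L. (if d (i * L + j) \<in> J then 1 else 0 :: nat)) \<le> real (T * L)"
      unfolding of_nat_interval_counts_eq_hits by (rule hits_le)
    then show "(\<Sum>i<T. \<Sum>j<L. (if d (i * L + j) \<in> J then 1 else 0 :: nat)) \<in> {..T * L}"
      by (simp only: atMost_iff of_nat_le_iff)
  qed
  then have "finite ?A" by (rule finite_subset) simp
  moreover have "?A \<noteq> {}" unfolding intervals_width_def by auto
  ultimately have "real (Max ?A) < R \<longleftrightarrow> (\<forall>x\<in>?A. real x < R)"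
    using Max_in Max_ge by (meson le_less_trans of_nat_le_iff)
  then show ?thesis unfolding of_nat_interval_counts_eq_hits[symmetric] by blast
qed

theorem mainTheorem8:
  fixes T L :: nat and \<sigma> w \<delta> :: real
    and K :: "nat \<Rightarrow> (nat \<Rightarrow> real) \<Rightarrow> real measure"
  assumes "T > 0" "L > 0"
    and "0 < \<sigma>" "\<sigma> \<le> 1" "0 < w" "w \<le> 1" "0 < \<delta>" "\<delta> < 1"
    and "adaptive_smooth \<sigma> (T * L) K"
  shows "measure (adaptive_seq K (T * L))
     {d \<in> space (pts (T * L)).
        real (Max ((\<lambda>J. \<Sum>i<T. \<Sum>j<L. (if d (i * L + j) \<in> J then 1 else 0 :: nat))
                    ` intervals_width w))
        < real (T * L) * w / \<sigma> * ln (2 * real (T * L) / \<delta>)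
          + 10 * sqrt (real (T * L) * w / \<sigma> * ln (2 * real (T * L) / \<delta>) * ln (1 / \<delta>))
          + 10 * ln (10 * real (T * L) * ln (2 * real (T * L) / \<delta>) / (\<sigma> * \<delta>))}
     \<ge> 1 - \<delta>"
  unfolding Max_interval_counts_less_iff
  using prob_all_interval_hits_less_ge[OF assms(9)] assms(1-8) by simp

end
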